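(* Let $K,d,S,N$ be positive integers with $S+2\le N\le d(K-1)+S$, let $C\triangleq d(K-1)+S+1-N$, let $\boldsymbol{\mathcal{N}}=\{\mathcal{N}_g:g\in[G]\}$ be a non-straggler pattern with intersection $\mathcal{I}=\bigcap_{g\in[G]}\mathcal{N}_g$ of size $I=|\mathcal{I}|$, and let $L\triangleq N-S-I$. Let $\alpha_0,\dots,\alpha_{K-1}\in\mathbb{C}$ be data points, $\beta_0,\dots,\beta_{N-1}\in\mathbb{C}$ evaluation points and $\boldsymbol{w}\in\mathbb{C}^K$ a weight vector. Suppose that $$\sum_{k=0}^{K-1}w_k\,P_{\mathcal{I}}(\alpha_k)\,\alpha_k^j=0\quad\text{for all } j\in[C+L],$$ where $P_{\mathcal{I}}(z)\triangleq\prod_{n\in\mathcal{I}}(z-\beta_n)$. Then $$\sum_{k=0}^{K-1}w_k\,P_g(\alpha_k)\,\alpha_k^j=0\quad\text{for all } j\in[C],\ g\in[G],$$ where $P_g(z)\triangleq\prod_{n\in\mathcal{N}_g}(z-\beta_n)$.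
   Context: Notation: for a positive integer $m$, $[m]=\{0,1,\dots,m-1\}$. A non-straggler pattern is a collection $\boldsymbol{\mathcal{N}}=\{\mathcal{N}_g:g\in[G]\}$ of subsets $\mathcal{N}_g\subseteq[N]$, each of cardinality $N-S$. *)

theory Defs
  imports Complex_Main
begin

definition non_straggler_pattern :: "nat \<Rightarrow> nat \<Rightarrow> nat \<Rightarrow> (nat \<Rightarrow> nat set) \<Rightarrow> bool" where
  "non_straggler_pattern N S G Ns \<longleftrightarrow>
     (\<forall>g<G. Ns g \<subseteq> {..<N} \<and> card (Ns g) = N - S)"

definition pattern_inter :: "nat \<Rightarrow> nat \<Rightarrow> (nat \<Rightarrow> nat set) \<Rightarrow> nat set" where
  "pattern_inter N G Ns = {n \<in> {..<N}. \<forall>g<G. n \<in> Ns g}"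

end

theory Submission
  imports Defs "HOL-Computational_Algebra.Polynomial"
begin

text \<open>Every \<open>P\<^sub>g\<close> factors as \<open>P\<^sub>\<I>\<close> times a polynomial of degree
  \<open>|\<N>\<^sub>g - \<I>| = L\<close>. Expanding that cofactor into monomials turns each of the required
  \<open>C\<close> moments of \<open>w P\<^sub>g\<close> into a linear combination of moments of \<open>w P\<^sub>\<I>\<close> of order
  below \<open>C + L\<close>, all of which vanish by hypothesis.\<close>

lemma sum_mult_poly_power_eq_0:
  fixes f x :: "'b \<Rightarrow> 'a::comm_semiring_1"
  assumes moments: "\<And>i. i < m + n \<Longrightarrow> (\<Sum>k\<in>A. f k * x k ^ i) = 0"
    and "degree p \<le> n" and "j < m"
  shows "(\<Sum>k\<in>A. f k * poly p (x k) * x k ^ j) = 0"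
proof -
  have "(\<Sum>k\<in>A. f k * poly p (x k) * x k ^ j)
      = (\<Sum>k\<in>A. \<Sum>i\<le>degree p. coeff p i * (f k * x k ^ (i + j)))"
    by (simp add: poly_altdef sum_distrib_left sum_distrib_right power_add mult_ac)
  also have "\<dots> = (\<Sum>i\<le>degree p. coeff p i * (\<Sum>k\<in>A. f k * x k ^ (i + j)))"
    by (subst sum.swap) (simp add: sum_distrib_left)
  also have "\<dots> = 0"
    using assms by (intro sum.neutral) auto
  finally show ?thesis .
qed

lemma degree_prod_linear_factors:
  fixes b :: "'b \<Rightarrow> 'a::idom"
  shows "degree (\<Prod>n\<in>D. [:- b n, 1:]) = card D"
  by (subst degree_prod_eq_sum_degree) auto

theorem lemma2:
  fixes K d S N G :: nat
    and Ns :: "nat \<Rightarrow> nat set"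
    and \<alpha> \<beta> w :: "nat \<Rightarrow> complex"
  assumes "K > 0" and "d > 0" and "S > 0" and "N > 0"
    and "S + 2 \<le> N" and "N \<le> d * (K - 1) + S"
    and "non_straggler_pattern N S G Ns"
    and "\<forall>j < (d * (K - 1) + S + 1 - N) + (N - S - card (pattern_inter N G Ns)).
           (\<Sum>k<K. w k * (\<Prod>n\<in>pattern_inter N G Ns. \<alpha> k - \<beta> n) * \<alpha> k ^ j) = 0"
  shows "\<forall>j < d * (K - 1) + S + 1 - N. \<forall>g < G.
           (\<Sum>k<K. w k * (\<Prod>n\<in>Ns g. \<alpha> k - \<beta> n) * \<alpha> k ^ j) = 0"
proof (intro allI impI)
  fix j g
  assume j: "j < d * (K - 1) + S + 1 - N" and g: "g < G"
  define I where "I = pattern_inter N G Ns"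
  define q where "q = (\<Prod>n\<in>Ns g - I. [:- \<beta> n, 1:])"
  have "finite (Ns g)" and card_Ns: "card (Ns g) = N - S"
    using assms(7) g unfolding non_straggler_pattern_def by (auto intro: finite_subset)
  moreover have "I \<subseteq> Ns g"
    using g unfolding I_def pattern_inter_def by auto
  ultimately have factor: "(\<Prod>n\<in>Ns g. z - \<beta> n) = (\<Prod>n\<in>I. z - \<beta> n) * poly q z" for z
    by (simp add: q_def poly_prod prod.subset_diff mult.commute)
  have "degree q \<le> N - S - card I"
    using \<open>I \<subseteq> Ns g\<close> \<open>finite (Ns g)\<close> card_Ns
    by (simp add: q_def degree_prod_linear_factors card_Diff_subset finite_subset)
  moreover have "(\<Sum>k<K. w k * (\<Prod>n\<in>I. \<alpha> k - \<beta> n) * \<alpha> k ^ i) = 0"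
    if "i < (d * (K - 1) + S + 1 - N) + (N - S - card I)" for i
    using assms(8) that unfolding I_def by blast
  ultimately have "(\<Sum>k<K. w k * (\<Prod>n\<in>I. \<alpha> k - \<beta> n) * poly q (\<alpha> k) * \<alpha> k ^ j) = 0"
    using sum_mult_poly_power_eq_0[where f = "\<lambda>k. w k * (\<Prod>n\<in>I. \<alpha> k - \<beta> n)"] j
    by blast
  then show "(\<Sum>k<K. w k * (\<Prod>n\<in>Ns g. \<alpha> k - \<beta> n) * \<alpha> k ^ j) = 0"
    by (simp add: factor mult.assoc)
qed

end
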